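(* Let $d\ge 0$ be an integer. Every triangle-free graph $G$ with $\mathrm{tww}(G)\le d$ admits a proper vertex coloring with at most $d+2$ colors.
   Context: A trigraph $H$ consists of a vertex set $V(H)$ and two disjoint sets of unordered pairs of distinct vertices: black edges $E(H)$ and red edges $R(H)$. Two vertices are adjacent (neighbors) if they are joined by a black or a red edge. The red graph of $H$ is the graph $(V(H),R(H))$; $H$ is a $d$-trigraph if its red graph has maximum degree at most $d$. A graph is a trigraph with no red edges. Contracting two distinct vertices $u,v$ of a trigraph $H$ yields the trigraph obtained by deleting $u$ and $v$ and adding a new vertex $z$ such that, for every other vertex $x$: $zx$ is a black edge if both $ux$ and $vx$ are black edges; $zx$ is not an edge if $x$ is adjacent to neither $u$ nor $v$; and $zx$ is a red edge otherwise. All edges not incident to $u$ or $v$ are unchanged. A $d$-sequence of an $n$-vertex graph $G$ is a sequence of $d$-trigraphs $G=G_n,G_{n-1},\dots,G_1$ such that $G_1$ has a single vertex and each $G_{i-1}$ is obtained from $G_i$ by one contraction (so $G_i$ has $i$ vertices). The twin-width $\mathrm{tww}(G)$ of $G$ is the minimum $d$ such that $G$ admits a $d$-sequence. *)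

theory Defs
  imports Main
begin

type_synonym 'a trigraph = "'a set \<times> 'a set set \<times> 'a set set"

definition tV :: "'a trigraph \<Rightarrow> 'a set" where "tV H = fst H"
definition tB :: "'a trigraph \<Rightarrow> 'a set set" where "tB H = fst (snd H)"
definition tR :: "'a trigraph \<Rightarrow> 'a set set" where "tR H = snd (snd H)"

definition is_trigraph :: "'a trigraph \<Rightarrow> bool" where
  "is_trigraph H \<longleftrightarrow> finite (tV H)
     \<and> tB H \<subseteq> {{x, y} | x y. x \<in> tV H \<and> y \<in> tV H \<and> x \<noteq> y}
     \<and> tR H \<subseteq> {{x, y} | x y. x \<in> tV H \<and> y \<in> tV H \<and> x \<noteq> y}
     \<and> tB H \<inter> tR H = {}"

definition red_degree :: "'a trigraph \<Rightarrow> 'a \<Rightarrow> nat" where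
  "red_degree H x = card {y. {x, y} \<in> tR H}"

definition is_d_trigraph :: "nat \<Rightarrow> 'a trigraph \<Rightarrow> bool" where
  "is_d_trigraph d H \<longleftrightarrow> is_trigraph H \<and> (\<forall>x \<in> tV H. red_degree H x \<le> d)"

text \<open>H' is obtained from H by contracting distinct u, v into a new vertex z
  (z must not clash with the remaining vertices; the name of z is immaterial).\<close>
definition contraction :: "'a trigraph \<Rightarrow> 'a \<Rightarrow> 'a \<Rightarrow> 'a \<Rightarrow> 'a trigraph \<Rightarrow> bool" where
  "contraction H u v z H' \<longleftrightarrow>
     u \<in> tV H \<and> v \<in> tV H \<and> u \<noteq> v \<and> z \<notin> tV H - {u, v} \<and>
     tV H' = insert z (tV H - {u, v}) \<and>
     tB H' = {e \<in> tB H. u \<notin> e \<and> v \<notin> e}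
             \<union> {{z, x} | x. x \<in> tV H - {u, v} \<and> {u, x} \<in> tB H \<and> {v, x} \<in> tB H} \<and>
     tR H' = {e \<in> tR H. u \<notin> e \<and> v \<notin> e}
             \<union> {{z, x} | x. x \<in> tV H - {u, v}
                   \<and> ({u, x} \<in> tB H \<union> tR H \<or> {v, x} \<in> tB H \<union> tR H)
                   \<and> \<not> ({u, x} \<in> tB H \<and> {v, x} \<in> tB H)}"

definition is_graph :: "'a set \<Rightarrow> 'a set set \<Rightarrow> bool" where
  "is_graph V E \<longleftrightarrow> is_trigraph (V, E, {})"

definition d_sequence :: "nat \<Rightarrow> 'a set \<Rightarrow> 'a set set \<Rightarrow> (nat \<Rightarrow> 'a trigraph) \<Rightarrow> bool" where
  "d_sequence d V E S \<longleftrightarrow>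
     (let n = card V in
       S n = (V, E, {}) \<and>
       card (tV (S 1)) = 1 \<and>
       (\<forall>i \<in> {1..n}. is_d_trigraph d (S i)) \<and>
       (\<forall>i \<in> {2..n}. \<exists>u v z. contraction (S i) u v z (S (i - 1))))"

definition tww :: "'a set \<Rightarrow> 'a set set \<Rightarrow> nat" where
  "tww V E = (LEAST d. \<exists>S. d_sequence d V E S)"

definition triangle_free :: "'a set \<Rightarrow> 'a set set \<Rightarrow> bool" where
  "triangle_free V E \<longleftrightarrow>
     \<not> (\<exists>x y z. {x, y} \<in> E \<and> {y, z} \<in> E \<and> {x, z} \<in> E)"

definition proper_coloring :: "'a set \<Rightarrow> 'a set set \<Rightarrow> ('a \<Rightarrow> nat) \<Rightarrow> bool" where
  "proper_coloring V E c \<longleftrightarrow> (\<forall>x \<in> V. \<forall>y \<in> V. {x, y} \<in> E \<longrightarrow> c x \<noteq> c y)"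

end

theory Submission
  imports Defs
begin

text \<open>Follow the contraction sequence backwards from the one-vertex trigraph, extending a
  colouring with \<open>d + 2\<close> colours at each uncontraction. The invariant making this possible
  is that no triangle has two black sides: it holds in a triangle-free graph and survives
  contractions. When \<open>z\<close> is split into \<open>u\<close> and \<open>v\<close>, vertex \<open>u\<close> keeps the colour of \<open>z\<close>.
  If \<open>u\<close> and \<open>v\<close> are adjacent, every other neighbour \<open>x\<close> of \<open>v\<close> is a red neighbour of
  \<open>z\<close> (a black edge \<open>zx\<close> would mean black edges \<open>xu\<close>, \<open>xv\<close>), so \<open>v\<close> has to avoid at most
  \<open>d + 1\<close> colours.\<close>

abbreviation tE :: "'a trigraph \<Rightarrow> 'a set set" where
  "tE H \<equiv> tB H \<union> tR H"

lemma trigraph_edge_vertices: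
  assumes "is_trigraph H" "{x, y} \<in> tE H"
  shows "x \<noteq> y" "x \<in> tV H" "y \<in> tV H"
  using assms by (auto simp: is_trigraph_def doubleton_eq_iff)

lemma finite_red_neighbours:
  assumes "is_trigraph H"
  shows "finite {y. {x, y} \<in> tR H}"
proof (rule finite_subset)
  show "{y. {x, y} \<in> tR H} \<subseteq> tV H" using trigraph_edge_vertices[OF assms] by blast
  show "finite (tV H)" using assms by (simp add: is_trigraph_def)
qed

lemma red_degree_le_card:
  assumes "is_trigraph H"
  shows "red_degree H x \<le> card (tV H)"
proof -
  have "{y. {x, y} \<in> tR H} \<subseteq> tV H" using trigraph_edge_vertices[OF assms] by blast
  then show ?thesis
    using assms unfolding red_degree_def is_trigraph_def by (simp add: card_mono)
qed

lemma contraction_is_trigraph: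
  assumes C: "contraction H u v z H'" and T: "is_trigraph H"
  shows "is_trigraph H'"
proof -
  let ?P = "{{x, y} | x y. x \<in> tV H' \<and> y \<in> tV H' \<and> x \<noteq> y}"
  have V': "tV H' = insert z (tV H - {u, v})" and z: "z \<notin> tV H - {u, v}"
    using C unfolding contraction_def by auto
  have old: "e \<in> ?P" if e: "e \<in> tE H" "u \<notin> e" "v \<notin> e" for e
  proof -
    obtain x y where "e = {x, y}" "x \<in> tV H" "y \<in> tV H" "x \<noteq> y"
      using e(1) T unfolding is_trigraph_def by blast
    then show ?thesis using e V' by auto
  qed
  have new: "{z, x} \<in> ?P" if "x \<in> tV H - {u, v}" for x
    using that V' z by blast
  have "tB H' \<subseteq> ?P"
  proof
    fix e assume "e \<in> tB H'"
    then have "(e \<in> tB H \<and> u \<notin> e \<and> v \<notin> e) \<or> (\<exists>x. e = {z, x} \<and> x \<in> tV H - {u, v})"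
      using C unfolding contraction_def by blast
    then show "e \<in> ?P" using old new by blast
  qed
  moreover have "tR H' \<subseteq> ?P"
  proof
    fix e assume "e \<in> tR H'"
    then have "(e \<in> tR H \<and> u \<notin> e \<and> v \<notin> e) \<or> (\<exists>x. e = {z, x} \<and> x \<in> tV H - {u, v})"
      using C unfolding contraction_def by blast
    then show "e \<in> ?P" using old new by blast
  qed
  moreover have "tB H' \<inter> tR H' = {}"
  proof (intro equals0I)
    fix e assume "e \<in> tB H' \<inter> tR H'"
    then have eB: "e \<in> tB H'" and eR: "e \<in> tR H'" by auto
    have "z \<notin> e" if e: "e \<in> tE H" "u \<notin> e" "v \<notin> e"
    proof -
      obtain x y where "e = {x, y}" "x \<in> tV H" "y \<in> tV H"
        using e(1) T unfolding is_trigraph_def by blast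
      then show ?thesis using e z by auto
    qed
    moreover have "(e \<in> tB H \<and> u \<notin> e \<and> v \<notin> e)
        \<or> (\<exists>x. e = {z, x} \<and> x \<in> tV H - {u, v} \<and> {u, x} \<in> tB H \<and> {v, x} \<in> tB H)"
      using eB C unfolding contraction_def by blast
    moreover have "(e \<in> tR H \<and> u \<notin> e \<and> v \<notin> e)
        \<or> (\<exists>x. e = {z, x} \<and> x \<in> tV H - {u, v} \<and> \<not> ({u, x} \<in> tB H \<and> {v, x} \<in> tB H))"
      using eR C unfolding contraction_def by blast
    moreover have "tB H \<inter> tR H = {}" using T unfolding is_trigraph_def by blast
    ultimately show False by (auto simp: doubleton_eq_iff)
  qed
  moreover have "finite (tV H')" using V' T by (simp add: is_trigraph_def)
  ultimately show ?thesis unfolding is_trigraph_def by blast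
qed

lemma contraction_black_edge_away:
  assumes "contraction H u v z H'" "s \<noteq> z" "t \<noteq> z"
  shows "{s, t} \<in> tB H' \<longleftrightarrow> {s, t} \<in> tB H \<and> s \<notin> {u, v} \<and> t \<notin> {u, v}"
  using assms unfolding contraction_def by (auto simp: doubleton_eq_iff)

lemma contraction_red_edge_away:
  assumes "contraction H u v z H'" "s \<noteq> z" "t \<noteq> z"
  shows "{s, t} \<in> tR H' \<longleftrightarrow> {s, t} \<in> tR H \<and> s \<notin> {u, v} \<and> t \<notin> {u, v}"
  using assms unfolding contraction_def by (auto simp: doubleton_eq_iff)

lemma contraction_black_edge_new:
  assumes C: "contraction H u v z H'" and T: "is_trigraph H" and "t \<noteq> z"
  shows "{z, t} \<in> tB H' \<longleftrightarrow> t \<in> tV H - {u, v} \<and> {u, t} \<in> tB H \<and> {v, t} \<in> tB H"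
proof -
  have "\<not> ({z, t} \<in> tB H \<and> u \<noteq> z \<and> v \<noteq> z)"
    using C trigraph_edge_vertices[OF T, of z t] unfolding contraction_def by auto
  then show ?thesis using assms unfolding contraction_def by (auto simp: doubleton_eq_iff)
qed

lemma contraction_edge_new:
  assumes C: "contraction H u v z H'" and T: "is_trigraph H" and "t \<noteq> z"
  shows "{z, t} \<in> tE H' \<longleftrightarrow> t \<in> tV H - {u, v} \<and> ({u, t} \<in> tE H \<or> {v, t} \<in> tE H)"
proof -
  have "\<not> ({z, t} \<in> tE H \<and> u \<noteq> z \<and> v \<noteq> z)"
    using C trigraph_edge_vertices[OF T, of z t] unfolding contraction_def by auto
  then show ?thesis using assms unfolding contraction_def by (auto simp: doubleton_eq_iff)
qed

definition trigraph_triangle_free :: "'a trigraph \<Rightarrow> bool" where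
  "trigraph_triangle_free H \<longleftrightarrow>
     (\<forall>x y w. {x, y} \<in> tB H \<longrightarrow> {x, w} \<in> tB H \<longrightarrow> {y, w} \<notin> tE H)"

definition trigraph_coloring :: "nat \<Rightarrow> 'a trigraph \<Rightarrow> ('a \<Rightarrow> nat) \<Rightarrow> bool" where
  "trigraph_coloring k H c \<longleftrightarrow>
     (\<forall>x\<in>tV H. \<forall>y\<in>tV H. {x, y} \<in> tE H \<longrightarrow> c x \<noteq> c y) \<and> (\<forall>x\<in>tV H. c x < k)"

lemma triangle_free_graph_trigraph:
  assumes "triangle_free V E"
  shows "trigraph_triangle_free (V, E, {})"
  using assms unfolding trigraph_triangle_free_def triangle_free_def tB_def tR_def
  by (auto simp: insert_commute)

lemma contraction_trigraph_triangle_free: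
  assumes C: "contraction H u v z H'" and T: "is_trigraph H" and F: "trigraph_triangle_free H"
  shows "trigraph_triangle_free H'"
  unfolding trigraph_triangle_free_def
proof (intro allI impI notI)
  fix x y w
  assume xy: "{x, y} \<in> tB H'" and xw: "{x, w} \<in> tB H'" and yw: "{y, w} \<in> tE H'"
  have FH: "\<And>a b c. {a, b} \<in> tB H \<Longrightarrow> {a, c} \<in> tB H \<Longrightarrow> {b, c} \<in> tE H \<Longrightarrow> False"
    using F unfolding trigraph_triangle_free_def by blast
  have distinct: "x \<noteq> y" "x \<noteq> w" "y \<noteq> w"
    using trigraph_edge_vertices(1)[OF contraction_is_trigraph[OF C T]] xy xw yw by blast+
  note away = contraction_black_edge_away[OF C] contraction_red_edge_away[OF C]
  note new_black = contraction_black_edge_new[OF C T]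
  note new_edge = contraction_edge_new[OF C T]
  consider "x = z" | "y = z" | "w = z" | "z \<notin> {x, y, w}" by blast
  then show False
  proof cases
    case 1
    then have "{u, y} \<in> tB H" "{u, w} \<in> tB H" "{y, w} \<in> tE H"
      using new_black[of y] new_black[of w] away[of y w] xy xw yw distinct by auto
    then show False by (rule FH)
  next
    case 2
    have "{x, u} \<in> tB H" "{x, v} \<in> tB H"
      using new_black[of x] xy 2 distinct by (auto simp: insert_commute)
    moreover have "{x, w} \<in> tB H" using away xw 2 distinct by auto
    moreover have "{u, w} \<in> tE H \<or> {v, w} \<in> tE H"
      using new_edge[of w] yw 2 distinct by auto
    ultimately show False using FH by blast
  next
    case 3
    have "{x, u} \<in> tB H" "{x, v} \<in> tB H"
      using new_black[of x] xw 3 distinct by (auto simp: insert_commute)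
    moreover have "{x, y} \<in> tB H" using away xy 3 distinct by auto
    moreover have "{u, y} \<in> tE H \<or> {v, y} \<in> tE H"
      using new_edge[of y] yw 3 distinct by (auto simp: insert_commute)
    ultimately show False using FH[of x u y] FH[of x v y] by blast
  next
    case 4
    then have "{x, y} \<in> tB H" "{x, w} \<in> tB H" "{y, w} \<in> tE H"
      using away xy xw yw by auto
    then show False by (rule FH)
  qed
qed

lemma ex_less_notin_insert_image:
  fixes f :: "'a \<Rightarrow> nat"
  assumes "finite N" "card N + 2 \<le> k"
  shows "\<exists>a<k. a \<noteq> b \<and> a \<notin> f ` N"
proof (rule ccontr)
  assume "\<not> ?thesis"
  then have "{..<k} \<subseteq> insert b (f ` N)" by auto
  then have "k \<le> card (insert b (f ` N))"
    using card_mono[of "insert b (f ` N)" "{..<k}"] assms(1) by simp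
  also have "\<dots> \<le> Suc (card (f ` N))" by (simp add: card_insert_if assms(1))
  also have "\<dots> \<le> Suc (card N)" using card_image_le[OF assms(1)] by simp
  finally show False using assms(2) by simp
qed

lemma trigraph_coloring_uncontract:
  assumes C: "contraction H u v z H'" and T: "is_trigraph H"
    and c': "trigraph_coloring k H' c'" and "a < k"
    and nbr: "\<And>t. t \<in> tV H - {u, v} \<Longrightarrow> {v, t} \<in> tE H \<Longrightarrow> a \<noteq> c' t"
    and uv: "{u, v} \<in> tE H \<Longrightarrow> a \<noteq> c' z"
  shows "trigraph_coloring k H (\<lambda>x. if x = u then c' z else if x = v then a else c' x)"
    (is "trigraph_coloring k H ?c")
proof -
  have V': "tV H' = insert z (tV H - {u, v})" and z: "z \<notin> tV H - {u, v}" and "u \<noteq> v"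
    using C unfolding contraction_def by auto
  have proper': "\<And>x y. x \<in> tV H' \<Longrightarrow> y \<in> tV H' \<Longrightarrow> {x, y} \<in> tE H' \<Longrightarrow> c' x \<noteq> c' y"
    and bound': "\<And>x. x \<in> tV H' \<Longrightarrow> c' x < k"
    using c' unfolding trigraph_coloring_def by blast+
  have u_nbr: "c' z \<noteq> c' t" if "t \<in> tV H - {u, v}" "{u, t} \<in> tE H" for t
  proof -
    have "{z, t} \<in> tE H'" using contraction_edge_new[OF C T, of t] that z by auto
    then show ?thesis using proper' V' that(1) by auto
  qed
  have endpoint: "?c s \<noteq> ?c t" if "s \<in> {u, v}" "t \<in> tV H - {u, v}" "{s, t} \<in> tE H" for s t
  proof (cases "s = u")
    case True
    then show ?thesis using that u_nbr by simp
  next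
    case False
    then have "s = v" using that(1) by blast
    then show ?thesis using that nbr \<open>u \<noteq> v\<close> by simp
  qed
  have proper: "?c x \<noteq> ?c y" if xy: "x \<in> tV H" "y \<in> tV H" "{x, y} \<in> tE H" for x y
  proof -
    have "x \<noteq> y" using trigraph_edge_vertices[OF T xy(3)] by blast
    have yx: "{y, x} \<in> tE H" using xy(3) by (simp add: insert_commute)
    consider "x \<in> {u, v}" "y \<in> {u, v}" | "x \<in> {u, v}" "y \<notin> {u, v}"
      | "x \<notin> {u, v}" "y \<in> {u, v}" | "x \<notin> {u, v}" "y \<notin> {u, v}" by blast
    then show ?thesis
    proof cases
      case 1
      with \<open>x \<noteq> y\<close> have "{x, y} = {u, v}" by blast
      then have "a \<noteq> c' z" using uv xy(3) by simp
      then show ?thesis using 1 \<open>x \<noteq> y\<close> \<open>u \<noteq> v\<close> by auto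
    next
      case 2
      then show ?thesis using endpoint xy by blast
    next
      case 3
      then show ?thesis using endpoint[of y x] xy yx by auto
    next
      case 4
      then have "x \<noteq> z" "y \<noteq> z" using xy z by auto
      then have "{x, y} \<in> tE H'"
        using contraction_black_edge_away[OF C] contraction_red_edge_away[OF C] xy(3) 4 by auto
      then show ?thesis using proper' V' xy 4 by auto
    qed
  qed
  have "?c x < k" if "x \<in> tV H" for x
    using bound' V' that \<open>a < k\<close> by auto
  with proper show ?thesis unfolding trigraph_coloring_def by blast
qed

lemma contraction_neighbours_red:
  assumes C: "contraction H u v z H'" and T: "is_trigraph H"
    and F: "trigraph_triangle_free H" and uv: "{u, v} \<in> tE H"
  shows "{t \<in> tV H - {u, v}. {v, t} \<in> tE H} \<subseteq> {y. {z, y} \<in> tR H'}"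
proof
  fix t assume t: "t \<in> {t \<in> tV H - {u, v}. {v, t} \<in> tE H}"
  then have "t \<noteq> z" using C unfolding contraction_def by auto
  have "{z, t} \<notin> tB H'"
  proof
    assume "{z, t} \<in> tB H'"
    then have "{t, u} \<in> tB H" "{t, v} \<in> tB H"
      using contraction_black_edge_new[OF C T \<open>t \<noteq> z\<close>] by (auto simp: insert_commute)
    then show False using F uv unfolding trigraph_triangle_free_def by blast
  qed
  moreover have "{z, t} \<in> tE H'" using contraction_edge_new[OF C T \<open>t \<noteq> z\<close>] t by auto
  ultimately show "t \<in> {y. {z, y} \<in> tR H'}" by auto
qed

lemma trigraph_coloring_uncontraction:
  assumes C: "contraction H u v z H'" and T: "is_trigraph H"
    and F: "trigraph_triangle_free H" and D: "is_d_trigraph d H'" and "d + 2 \<le> k"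
    and c': "trigraph_coloring k H' c'"
  shows "\<exists>c. trigraph_coloring k H c"
proof -
  have "z \<in> tV H'" using C unfolding contraction_def by auto
  then have z_col: "c' z < k" using c' unfolding trigraph_coloring_def by blast
  show ?thesis
  proof (cases "{u, v} \<in> tE H")
    case False
    show ?thesis
    proof (rule exI, rule trigraph_coloring_uncontract[OF C T c' z_col])
      fix t assume t: "t \<in> tV H - {u, v}" "{v, t} \<in> tE H"
      then have "t \<noteq> z" "t \<in> tV H'" using C unfolding contraction_def by auto
      moreover have "{z, t} \<in> tE H'" using contraction_edge_new[OF C T \<open>t \<noteq> z\<close>] t by blast
      ultimately show "c' z \<noteq> c' t"
        using c' \<open>z \<in> tV H'\<close> unfolding trigraph_coloring_def by blast
    next
      assume "{u, v} \<in> tE H"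
      with False show "c' z \<noteq> c' z" by blast
    qed
  next
    case True
    let ?N = "{t \<in> tV H - {u, v}. {v, t} \<in> tE H}"
    have red: "?N \<subseteq> {y. {z, y} \<in> tR H'}"
      using contraction_neighbours_red[OF C T F True] .
    have fin: "finite {y. {z, y} \<in> tR H'}"
      using D finite_red_neighbours[of H'] unfolding is_d_trigraph_def by blast
    have "card ?N \<le> red_degree H' z"
      unfolding red_degree_def using card_mono[OF fin red] .
    also have "\<dots> \<le> d" using D \<open>z \<in> tV H'\<close> unfolding is_d_trigraph_def by blast
    finally have "card ?N \<le> d" .
    with \<open>d + 2 \<le> k\<close> have "card ?N + 2 \<le> k" by simp
    from ex_less_notin_insert_image[OF finite_subset[OF red fin] this, where b = "c' z" and f = c']
    obtain a where "a < k" "a \<noteq> c' z" "a \<notin> c' ` ?N" by blast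
    show ?thesis
    proof (rule exI, rule trigraph_coloring_uncontract[OF C T c' \<open>a < k\<close>])
      fix t assume "t \<in> tV H - {u, v}" "{v, t} \<in> tE H"
      then have "c' t \<in> c' ` ?N" by blast
      then show "a \<noteq> c' t" using \<open>a \<notin> c' ` ?N\<close> by blast
    next
      show "a \<noteq> c' z" by fact
    qed
  qed
qed

lemma card_contraction:
  assumes C: "contraction H u v z H'" and fin: "finite (tV H)"
  shows "card (tV H') = card (tV H) - 1"
proof -
  have V': "tV H' = insert z (tV H - {u, v})" and z: "z \<notin> tV H - {u, v}"
    and uv: "{u, v} \<subseteq> tV H" "u \<noteq> v"
    using C unfolding contraction_def by simp_all
  have "card {u, v} \<le> card (tV H)" using card_mono[OF fin uv(1)] .
  moreover have "card (tV H - {u, v}) = card (tV H) - card {u, v}"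
    using card_Diff_subset[OF _ uv(1)] by simp
  moreover have "card (tV H') = Suc (card (tV H - {u, v}))"
    unfolding V' using fin z by simp
  ultimately show ?thesis using uv(2) by simp
qed

lemma ex_contraction:
  assumes "u \<in> tV H" "v \<in> tV H" "u \<noteq> v"
  shows "\<exists>H'. contraction H u v u H'"
proof
  let ?H' = "(insert u (tV H - {u, v}),
       {e \<in> tB H. u \<notin> e \<and> v \<notin> e}
         \<union> {{u, x} | x. x \<in> tV H - {u, v} \<and> {u, x} \<in> tB H \<and> {v, x} \<in> tB H},
       {e \<in> tR H. u \<notin> e \<and> v \<notin> e}
         \<union> {{u, x} | x. x \<in> tV H - {u, v} \<and> ({u, x} \<in> tE H \<or> {v, x} \<in> tE H)
                     \<and> \<not> ({u, x} \<in> tB H \<and> {v, x} \<in> tB H)})"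
  show "contraction H u v u ?H'"
    using assms unfolding contraction_def tV_def tB_def tR_def by simp
qed

lemma contraction_sequence_exists:
  assumes "is_trigraph H" "card (tV H) = n" "1 \<le> n"
  shows "\<exists>S. S n = H \<and> (\<forall>i\<in>{1..n}. is_trigraph (S i) \<and> card (tV (S i)) = i)
           \<and> (\<forall>i\<in>{2..n}. \<exists>u v z. contraction (S i) u v z (S (i - 1)))"
  using assms(3,1,2)
proof (induction n arbitrary: H rule: nat_induct_at_least)
  case base
  then show ?case by (intro exI[of _ "\<lambda>_. H"]) auto
next
  case (Suc n)
  have fin: "finite (tV H)" using Suc.prems(1) by (simp add: is_trigraph_def)
  have "\<not> card (tV H) \<le> Suc 0" using Suc.prems(2) \<open>1 \<le> n\<close> by simp
  then obtain u v where uv: "u \<in> tV H" "v \<in> tV H" "u \<noteq> v"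
    using card_le_Suc0_iff_eq[OF fin] by blast
  obtain H' where C: "contraction H u v u H'" using ex_contraction[OF uv] by blast
  have "is_trigraph H'" using contraction_is_trigraph[OF C Suc.prems(1)] .
  moreover have "card (tV H') = n" using card_contraction[OF C fin] Suc.prems(2) by simp
  ultimately obtain S where S: "S n = H'" "\<forall>i\<in>{1..n}. is_trigraph (S i) \<and> card (tV (S i)) = i"
      "\<forall>i\<in>{2..n}. \<exists>u v z. contraction (S i) u v z (S (i - 1))"
    using Suc.IH by blast
  let ?S = "S(Suc n := H)"
  have "\<forall>i\<in>{1..Suc n}. is_trigraph (?S i) \<and> card (tV (?S i)) = i"
    using S(2) Suc.prems by (auto simp: le_Suc_eq)
  moreover have "\<forall>i\<in>{2..Suc n}. \<exists>u v z. contraction (?S i) u v z (?S (i - 1))"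
    using S(1,3) C \<open>1 \<le> n\<close> by (auto simp: le_Suc_eq)
  ultimately show ?case by (intro exI[of _ ?S]) simp
qed

lemma ex_d_sequence:
  assumes "is_graph V E" "V \<noteq> {}"
  shows "\<exists>S. d_sequence (card V) V E S"
proof -
  have G: "is_trigraph (V, E, {})" using assms(1) unfolding is_graph_def .
  have n: "1 \<le> card V"
    using G assms(2) by (simp add: is_trigraph_def tV_def Suc_le_eq card_gt_0_iff)
  have "card (tV (V, E, {})) = card V" by (simp add: tV_def)
  from contraction_sequence_exists[OF G this n] obtain S where S: "S (card V) = (V, E, {})"
      "\<forall>i\<in>{1..card V}. is_trigraph (S i) \<and> card (tV (S i)) = i"
      "\<forall>i\<in>{2..card V}. \<exists>u v z. contraction (S i) u v z (S (i - 1))"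
    by blast
  have "is_d_trigraph (card V) (S i)" if i: "i \<in> {1..card V}" for i
  proof -
    have "red_degree (S i) x \<le> card V" for x
      using red_degree_le_card[of "S i" x] S(2) i by auto
    then show ?thesis using S(2) i unfolding is_d_trigraph_def by blast
  qed
  then show ?thesis using S n unfolding d_sequence_def Let_def by auto
qed

lemma tww_d_sequence:
  assumes "is_graph V E" "V \<noteq> {}"
  shows "\<exists>S. d_sequence (tww V E) V E S"
  unfolding tww_def using ex_d_sequence[OF assms] by (rule LeastI_ex[OF exI])

lemma d_sequence_mono:
  assumes "d_sequence d V E S" "d \<le> d'"
  shows "d_sequence d' V E S"
  using assms unfolding d_sequence_def is_d_trigraph_def Let_def by fastforce

lemma d_sequence_d_trigraph:
  assumes "d_sequence d V E S" "i \<in> {1..card V}"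
  shows "is_d_trigraph d (S i)"
  using assms unfolding d_sequence_def Let_def by blast

lemma d_sequence_contraction:
  assumes "d_sequence d V E S" "1 \<le> j" "j < card V"
  shows "\<exists>u v z. contraction (S (Suc j)) u v z (S j)"
proof -
  have "Suc j \<in> {2..card V}" using assms(2,3) by simp
  then show ?thesis using assms(1) unfolding d_sequence_def Let_def by fastforce
qed

lemma d_sequence_trigraph_triangle_free:
  assumes S: "d_sequence d V E S" and tf: "triangle_free V E" and i: "i \<in> {1..card V}"
  shows "trigraph_triangle_free (S i)"
proof -
  have "i \<le> card V" using i by simp
  then show ?thesis
  proof (induction i rule: inc_induct)
    case base
    show ?case using S triangle_free_graph_trigraph[OF tf] unfolding d_sequence_def Let_def by simp
  next
    case (step j)
    have "1 \<le> j" using i \<open>i \<le> j\<close> by simp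
    then obtain u v z where C: "contraction (S (Suc j)) u v z (S j)"
      using d_sequence_contraction[OF S] \<open>j < card V\<close> by blast
    have "is_trigraph (S (Suc j))"
      using d_sequence_d_trigraph[OF S] \<open>j < card V\<close> unfolding is_d_trigraph_def by simp
    then show ?case by (rule contraction_trigraph_triangle_free[OF C _ step.IH])
  qed
qed

lemma single_vertex_trigraph_coloring:
  assumes "is_trigraph H" "card (tV H) = 1" "0 < k"
  shows "trigraph_coloring k H (\<lambda>_. 0)"
proof -
  obtain a where "tV H = {a}" using assms(2) card_1_singletonE by blast
  then have "{x, y} \<notin> tE H" if "x \<in> tV H" "y \<in> tV H" for x y
    using that trigraph_edge_vertices(1)[OF assms(1), of x y] by auto
  then show ?thesis using assms(3) unfolding trigraph_coloring_def by blast
qed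

lemma d_sequence_trigraph_coloring:
  assumes S: "d_sequence d V E S" and tf: "triangle_free V E" and i: "i \<in> {1..card V}"
  shows "\<exists>c. trigraph_coloring (d + 2) (S i) c"
proof -
  have "1 \<le> i" using i by simp
  then show ?thesis
  proof (induction i rule: dec_induct)
    case base
    have "is_trigraph (S 1)"
      using d_sequence_d_trigraph[OF S, of 1] i unfolding is_d_trigraph_def by simp
    moreover have "card (tV (S 1)) = 1" using S unfolding d_sequence_def Let_def by simp
    ultimately show ?case using single_vertex_trigraph_coloring[of "S 1" "d + 2"] by auto
  next
    case (step j)
    have j: "j < card V" using \<open>j < i\<close> i by simp
    obtain u v z where C: "contraction (S (Suc j)) u v z (S j)"
      using d_sequence_contraction[OF S \<open>1 \<le> j\<close> j] by blast
    have "is_trigraph (S (Suc j))"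
      using d_sequence_d_trigraph[OF S] j unfolding is_d_trigraph_def by simp
    moreover have "trigraph_triangle_free (S (Suc j))"
      using d_sequence_trigraph_triangle_free[OF S tf] j by simp
    moreover have "is_d_trigraph d (S j)" using d_sequence_d_trigraph[OF S] j \<open>1 \<le> j\<close> by simp
    ultimately show ?case
      using trigraph_coloring_uncontraction[OF C] step.IH by blast
  qed
qed

theorem mainTheorem9:
  fixes V :: "'a set" and E :: "'a set set" and d :: nat
  assumes "is_graph V E"
    and "triangle_free V E"
    and "tww V E \<le> d"
  shows "\<exists>c :: 'a \<Rightarrow> nat. proper_coloring V E c \<and> card (c ` V) \<le> d + 2"
proof (cases "V = {}")
  case True
  then show ?thesis by (intro exI[of _ "\<lambda>_. 0"]) (simp add: proper_coloring_def)
next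
  case False
  then obtain S where "d_sequence (tww V E) V E S" using tww_d_sequence[OF assms(1)] by blast
  then have S: "d_sequence d V E S" using d_sequence_mono assms(3) by blast
  have "card V \<in> {1..card V}"
    using False assms(1) by (simp add: is_graph_def is_trigraph_def tV_def Suc_le_eq card_gt_0_iff)
  then obtain c where c: "trigraph_coloring (d + 2) (S (card V)) c"
    using d_sequence_trigraph_coloring[OF S assms(2)] by blast
  moreover have "S (card V) = (V, E, {})" using S unfolding d_sequence_def Let_def by simp
  ultimately have "proper_coloring V E c" "c ` V \<subseteq> {..<d + 2}"
    unfolding trigraph_coloring_def proper_coloring_def tV_def tB_def tR_def by auto
  then show ?thesis using card_mono[OF finite_lessThan, of "c ` V"] by auto
qed

end
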